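(* Let $G=(V,E)$ be a finite simple connected graph of order $n\geq 2$, and let $S(G)$ be its splitting graph. Then $\beta_0(S(G)) = n+\beta^*_0(G)$.
   Context: For a finite simple graph $G=(V,E)$, the splitting graph $S(G)$ is obtained from $G$ by adding, for each vertex $v\in V$, a new vertex $v'$, and joining $v'$ to a vertex $u\in V$ if and only if $uv\in E$ (the new vertices are pairwise non-adjacent; the edges of $G$ are kept). $\beta_0(H)$ denotes the independence number of a graph $H$ (maximum size of an independent set). For a graph $G$ of order $n\geq 2$, $\beta_0^*(G):=\max\{|S|-|N(S)| : S \text{ is an independent set of } G\}$, where $N(S)$ is the set of vertices of $G$ adjacent to some vertex of $S$ (the empty set counts as an independent set). *)

theory Defs
  imports Main
begin

definition simple_graph :: "'a set \<Rightarrow> ('a \<Rightarrow> 'a \<Rightarrow> bool) \<Rightarrow> bool" where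
  "simple_graph V E \<longleftrightarrow> finite V \<and> (\<forall>u v. E u v \<longrightarrow> u \<in> V \<and> v \<in> V)
     \<and> (\<forall>u v. E u v \<longrightarrow> E v u) \<and> (\<forall>v. \<not> E v v)"

definition connected_graph :: "'a set \<Rightarrow> ('a \<Rightarrow> 'a \<Rightarrow> bool) \<Rightarrow> bool" where
  "connected_graph V E \<longleftrightarrow> (\<forall>u\<in>V. \<forall>v\<in>V. E\<^sup>*\<^sup>* u v)"

definition independent_set :: "'a set \<Rightarrow> ('a \<Rightarrow> 'a \<Rightarrow> bool) \<Rightarrow> 'a set \<Rightarrow> bool" where
  "independent_set V E S \<longleftrightarrow> S \<subseteq> V \<and> (\<forall>u\<in>S. \<forall>v\<in>S. \<not> E u v)"

definition indep_number :: "'a set \<Rightarrow> ('a \<Rightarrow> 'a \<Rightarrow> bool) \<Rightarrow> nat" where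
  "indep_number V E = Max {card S | S. independent_set V E S}"

definition nbhd :: "'a set \<Rightarrow> ('a \<Rightarrow> 'a \<Rightarrow> bool) \<Rightarrow> 'a set \<Rightarrow> 'a set" where
  "nbhd V E S = {v\<in>V. \<exists>u\<in>S. E u v}"

definition beta0_star :: "'a set \<Rightarrow> ('a \<Rightarrow> 'a \<Rightarrow> bool) \<Rightarrow> int" where
  "beta0_star V E = Max {int (card S) - int (card (nbhd V E S)) | S. independent_set V E S}"

text \<open>Splitting graph: original vertex v is Inl v, its copy v' is Inr v.\<close>
definition split_vertices :: "'a set \<Rightarrow> ('a + 'a) set" where
  "split_vertices V = Inl ` V \<union> Inr ` V"

fun split_edges :: "('a \<Rightarrow> 'a \<Rightarrow> bool) \<Rightarrow> ('a + 'a) \<Rightarrow> ('a + 'a) \<Rightarrow> bool" where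
  "split_edges E (Inl u) (Inl v) = E u v"
| "split_edges E (Inl u) (Inr v) = E u v"
| "split_edges E (Inr u) (Inl v) = E u v"
| "split_edges E (Inr u) (Inr v) = False"

end

theory Submission
  imports Defs
begin

text \<open>An independent set T of S(G) consists of an independent set A of G together with
  copies v' of vertices v; a copy v' is adjacent to A exactly when v \<in> N(A). Hence
  |T| \<le> |A| + (n - |N(A)|), with equality for T = A \<union> (V - N(A))', which is always
  independent. Taking maxima gives the identity.\<close>

lemma finite_independent_sets:
  "finite V \<Longrightarrow> finite {S. independent_set V E S}"
  unfolding independent_set_def by (rule finite_subset[of _ "Pow V"]) auto

lemma independent_set_empty: "independent_set V E {}"
  by (simp add: independent_set_def)

lemma card_le_indep_number:
  assumes "finite V" and "independent_set V E S"
  shows "card S \<le> indep_number V E"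
  unfolding indep_number_def
  using assms finite_independent_sets[OF assms(1), of E] by (intro Max_ge) auto

lemma indep_number_attained:
  assumes "finite V"
  obtains S where "independent_set V E S" and "indep_number V E = card S"
proof -
  have "indep_number V E \<in> {card S | S. independent_set V E S}"
    unfolding indep_number_def
    using finite_independent_sets[OF assms, of E] independent_set_empty by (intro Max_in) auto
  then show ?thesis using that by blast
qed

lemma beta0_star_ge:
  assumes "finite V" and "independent_set V E S"
  shows "int (card S) - int (card (nbhd V E S)) \<le> beta0_star V E"
  unfolding beta0_star_def
  using assms finite_independent_sets[OF assms(1), of E] by (intro Max_ge) auto

lemma beta0_star_attained:
  assumes "finite V"
  obtains S where "independent_set V E S"
    and "beta0_star V E = int (card S) - int (card (nbhd V E S))"
proof -
  have "beta0_star V E \<in> {int (card S) - int (card (nbhd V E S)) | S. independent_set V E S}"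
    unfolding beta0_star_def
    using finite_independent_sets[OF assms, of E] independent_set_empty by (intro Max_in) auto
  then show ?thesis using that by blast
qed

lemma nbhd_subset: "nbhd V E S \<subseteq> V"
  by (auto simp: nbhd_def)

lemma card_nbhd_le: "finite V \<Longrightarrow> card (nbhd V E S) \<le> card V"
  by (rule card_mono[OF _ nbhd_subset])

lemma card_Diff_nbhd: "finite V \<Longrightarrow> card (V - nbhd V E S) = card V - card (nbhd V E S)"
  using nbhd_subset by (meson card_Diff_subset finite_subset)

lemma split_vertices_eq_Plus: "split_vertices V = V <+> V"
  by (simp add: split_vertices_def Plus_def)

lemma Plus_vimage_Inl_Inr: "T = Inl -` T <+> Inr -` T"
proof (rule set_eqI)
  fix x show "x \<in> T \<longleftrightarrow> x \<in> Inl -` T <+> Inr -` T" by (cases x) auto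
qed

lemma independent_split_Inl:
  assumes "independent_set (split_vertices V) (split_edges E) T"
  shows "independent_set V E (Inl -` T)"
proof -
  have "T \<subseteq> V <+> V" and no_edge: "\<And>x y. x \<in> T \<Longrightarrow> y \<in> T \<Longrightarrow> \<not> split_edges E x y"
    using assms unfolding independent_set_def split_vertices_eq_Plus by auto
  then have "Inl -` T \<subseteq> V" by auto
  moreover have "\<not> E u v" if "Inl u \<in> T" "Inl v \<in> T" for u v
    using no_edge[OF that] by simp
  ultimately show ?thesis unfolding independent_set_def by blast
qed

lemma independent_split_Inr_subset:
  assumes "independent_set (split_vertices V) (split_edges E) T"
  shows "Inr -` T \<subseteq> V - nbhd V E (Inl -` T)"
  using assms unfolding independent_set_def split_vertices_eq_Plus nbhd_def
  by (fastforce elim: PlusE)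

lemma card_independent_split_le:
  assumes "finite V" and T: "independent_set (split_vertices V) (split_edges E) T"
  shows "int (card T) \<le> int (card V) + (int (card (Inl -` T)) - int (card (nbhd V E (Inl -` T))))"
proof -
  let ?A = "Inl -` T"
  have "finite T"
    using T assms(1) unfolding independent_set_def split_vertices_eq_Plus
    by (meson finite_Plus finite_subset)
  then have "card T = card ?A + card (Inr -` T)"
    by (subst Plus_vimage_Inl_Inr) (simp add: card_Plus finite_vimageI)
  moreover have "card (Inr -` T) \<le> card V - card (nbhd V E ?A)"
    using card_mono[OF _ independent_split_Inr_subset[OF T]] card_Diff_nbhd[OF assms(1)] assms(1)
    by simp
  moreover have "card (nbhd V E ?A) \<le> card V"
    using assms(1) by (rule card_nbhd_le)
  ultimately show ?thesis by linarith
qed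

lemma independent_split_Plus_non_nbhd:
  assumes "simple_graph V E" and A: "independent_set V E A"
  shows "independent_set (split_vertices V) (split_edges E) (A <+> (V - nbhd V E A))"
  unfolding independent_set_def split_vertices_eq_Plus
proof (intro conjI ballI)
  show "A <+> (V - nbhd V E A) \<subseteq> V <+> V"
    using A unfolding independent_set_def by auto
next
  have sym: "E u v \<Longrightarrow> E v u" for u v
    using assms(1) unfolding simple_graph_def by blast
  fix x y assume "x \<in> A <+> (V - nbhd V E A)" and "y \<in> A <+> (V - nbhd V E A)"
  then show "\<not> split_edges E x y"
  proof (elim PlusE)
    fix u v assume "u \<in> A" "v \<in> A" "x = Inl u" "y = Inl v"
    then show ?thesis using A by (simp add: independent_set_def)
  next
    fix u v assume "u \<in> A" "v \<in> V - nbhd V E A" "x = Inl u" "y = Inr v"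
    then show ?thesis by (auto simp: nbhd_def)
  next
    fix u v assume "u \<in> V - nbhd V E A" "v \<in> A" "x = Inr u" "y = Inl v"
    then show ?thesis using sym by (auto simp: nbhd_def)
  next
    fix u v assume "x = Inr u" "y = Inr v"
    then show ?thesis by simp
  qed
qed

lemma card_Plus_non_nbhd:
  assumes "finite V" and "A \<subseteq> V"
  shows "int (card (A <+> (V - nbhd V E A))) = int (card V) + (int (card A) - int (card (nbhd V E A)))"
  using assms card_nbhd_le[OF assms(1), of E A] card_Diff_nbhd[OF assms(1), of E A]
  by (simp add: card_Plus finite_subset of_nat_diff)

theorem theorem1:
  fixes V :: "'a set" and E :: "'a \<Rightarrow> 'a \<Rightarrow> bool"
  assumes "simple_graph V E" and "connected_graph V E" and "card V \<ge> 2"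
  shows "int (indep_number (split_vertices V) (split_edges E)) = int (card V) + beta0_star V E"
proof (rule antisym)
  have fin: "finite V" using assms(1) by (simp add: simple_graph_def)
  then have fin_split: "finite (split_vertices V)" by (simp add: split_vertices_eq_Plus)
  obtain T where T: "independent_set (split_vertices V) (split_edges E) T"
    and max_T: "indep_number (split_vertices V) (split_edges E) = card T"
    using indep_number_attained[OF fin_split] .
  show "int (indep_number (split_vertices V) (split_edges E)) \<le> int (card V) + beta0_star V E"
    using card_independent_split_le[OF fin T] beta0_star_ge[OF fin independent_split_Inl[OF T]] max_T
    by linarith
  obtain A where A: "independent_set V E A"
    and max_A: "beta0_star V E = int (card A) - int (card (nbhd V E A))"
    using beta0_star_attained[OF fin] .
  have "A \<subseteq> V" using A by (simp add: independent_set_def)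
  then show "int (card V) + beta0_star V E \<le> int (indep_number (split_vertices V) (split_edges E))"
    using card_le_indep_number[OF fin_split independent_split_Plus_non_nbhd[OF assms(1) A]]
      card_Plus_non_nbhd[OF fin, of A E] max_A
    by linarith
qed

end
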